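(* Let ${\rm PSL}_2(\mathbb Z)$ be presented by generators $\rho,\sigma$ with relations $\rho^3=1$, $\sigma^2=1$. Then ${\rm PSL}_2(\mathbb Z)$ acts on $\Delta$ as a group of automorphisms such that $\rho$ sends $A\mapsto B$, $B\mapsto C$, $C\mapsto A$, $\alpha\mapsto\beta$, $\beta\mapsto\gamma$, $\gamma\mapsto\alpha$, and $\sigma$ sends $A\mapsto B$, $B\mapsto A$, $C\mapsto C+\frac{AB-BA}{q-q^{-1}}$, $\alpha\mapsto\beta$, $\beta\mapsto\alpha$, $\gamma\mapsto\gamma$.
   Context: Let $\mathbb F$ be a field and fix a nonzero $q\in\mathbb F$ with $q^4\neq 1$. Algebras are associative with 1. The universal Askey--Wilson algebra $\Delta$ is the $\mathbb F$-algebra with generators $A,B,C$ subject to the relations that each of $A+\frac{qBC-q^{-1}CB}{q^2-q^{-2}}$, $B+\frac{qCA-q^{-1}AC}{q^2-q^{-2}}$, $C+\frac{qAB-q^{-1}BA}{q^2-q^{-2}}$ is central in $\Delta$. Let $\alpha,\beta,\gamma$ denote these three central elements (in this order) each multiplied by $q+q^{-1}$. *)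

theory Defs
  imports "HOL-Library.Poly_Mapping" "HOL-Algebra.QuotRing"
begin

text \<open>The free (noncommutative) associative unital algebra over a field on the
  three generators A, B, C: finitely supported functions from words in the
  generators to the field, with multiplication the convolution over
  concatenation of words.\<close>

datatype awgen = GA | GB | GC

datatype aw_word = AWWord "awgen list"

instantiation aw_word :: monoid_add
begin
definition zero_aw_word :: aw_word where "zero_aw_word = AWWord []"
fun plus_aw_word :: "aw_word \<Rightarrow> aw_word \<Rightarrow> aw_word" where
  "plus_aw_word (AWWord x) (AWWord y) = AWWord (x @ y)"
instance
proof
  fix a b c :: aw_word
  show "a + b + c = a + (b + c)" by (cases a; cases b; cases c) simp
  show "0 + a = a" by (cases a) (simp add: zero_aw_word_def)
  show "a + 0 = a" by (cases a) (simp add: zero_aw_word_def)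
qed
end

type_synonym 'a freealg = "aw_word \<Rightarrow>\<^sub>0 'a"

definition fa_const :: "'a::field \<Rightarrow> 'a freealg" where
  "fa_const c = Poly_Mapping.single 0 c"

definition fa_smult :: "'a::field \<Rightarrow> 'a freealg \<Rightarrow> 'a freealg" where
  "fa_smult c x = fa_const c * x"

definition fa_gen :: "awgen \<Rightarrow> 'a::field freealg" where
  "fa_gen g = Poly_Mapping.single (AWWord [g]) 1"

abbreviation fA :: "'a::field freealg" where "fA \<equiv> fa_gen GA"
abbreviation fB :: "'a::field freealg" where "fB \<equiv> fa_gen GB"
abbreviation fC :: "'a::field freealg" where "fC \<equiv> fa_gen GC"

definition free_ring :: "('a::field freealg) ring" where
  "free_ring = \<lparr>carrier = UNIV, mult = (*), one = 1, zero = 0, add = (+)\<rparr>"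

definition aw_central :: "'a::field \<Rightarrow> 'a freealg \<Rightarrow> 'a freealg \<Rightarrow> 'a freealg \<Rightarrow> 'a freealg" where
  "aw_central q x y z =
     x + fa_smult (1 / (q^2 - 1 / q^2)) (fa_smult q (y * z) - fa_smult (1 / q) (z * y))"

definition aw_alpha :: "'a::field \<Rightarrow> 'a freealg" where
  "aw_alpha q = fa_smult (q + 1 / q) (aw_central q fA fB fC)"
definition aw_beta :: "'a::field \<Rightarrow> 'a freealg" where
  "aw_beta q = fa_smult (q + 1 / q) (aw_central q fB fC fA)"
definition aw_gamma :: "'a::field \<Rightarrow> 'a freealg" where
  "aw_gamma q = fa_smult (q + 1 / q) (aw_central q fC fA fB)"

definition aw_rel :: "'a::field \<Rightarrow> 'a freealg set" where
  "aw_rel q = {c * y - y * c | c y. c \<in> {aw_central q fA fB fC, aw_central q fB fC fA,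
                                           aw_central q fC fA fB}}"

definition aw_ideal :: "'a::field \<Rightarrow> 'a freealg set" where
  "aw_ideal q = genideal free_ring (aw_rel q)"

definition UAW :: "'a::field \<Rightarrow> ('a freealg set) ring" where
  "UAW q = free_ring Quot aw_ideal q"

definition aw_cls :: "'a::field \<Rightarrow> 'a freealg \<Rightarrow> 'a freealg set" where
  "aw_cls q x = aw_ideal q +>\<^bsub>free_ring\<^esub> x"

definition aw_alg_aut :: "'a::field \<Rightarrow> ('a freealg set \<Rightarrow> 'a freealg set) \<Rightarrow> bool" where
  "aw_alg_aut q f \<longleftrightarrow> f \<in> ring_iso (UAW q) (UAW q) \<and>
     (\<forall>c. f (aw_cls q (fa_const c)) = aw_cls q (fa_const c))"

end

theory Submission
  imports Defs
begin

text \<open>Checking on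
  generators, \<open>\<rho>\<^sup>3\<close> and \<open>\<sigma>\<^sup>2\<close> are the identity, so both are automorphisms of the free algebra.
  They descend to \<open>\<Delta>\<close> because they map each of the three defining central elements to a
  central element modulo the defining ideal: \<open>\<rho>\<close> permutes them cyclically, and \<open>\<sigma>\<close> fixes the
  third while sending the first two to the second and the first plus a multiple of a commutator
  with the third. The latter is an identity in the free algebra that holds as soon as
  \<open>1/(q - q\<^sup>-\<^sup>1) = (q + q\<^sup>-\<^sup>1)/(q\<^sup>2 - q\<^sup>-\<^sup>2)\<close>, which is where \<open>q\<^sup>4 \<noteq> 1\<close> is needed.\<close>

lemma poly_mapping_induct_single [case_names zero single add]:
  assumes "P 0" and "\<And>w c. P (Poly_Mapping.single w c)"
    and "\<And>a b. P a \<Longrightarrow> P b \<Longrightarrow> P (a + b)"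
  shows "P p"
proof (induction p rule: update_induct)
  case const
  show ?case by fact
next
  case (update f k v)
  have "Poly_Mapping.update k v f = f + Poly_Mapping.single k v"
    using update.hyps(1)
    by (intro poly_mapping_eqI) (auto simp: lookup_update lookup_add lookup_single in_keys_iff when_def)
  then show ?case using assms update by simp
qed

lemma fa_const_add: "fa_const (a + b) = fa_const a + fa_const b"
  by (simp add: fa_const_def single_add)

lemma fa_const_mult: "fa_const a * fa_const b = fa_const (a * b)"
  by (simp add: fa_const_def mult_single)

lemma fa_const_commute: "fa_const c * x = x * fa_const c"
proof (induction x rule: poly_mapping_induct_single)
  case zero then show ?case by simp
next
  case (single w d) then show ?case by (simp add: fa_const_def mult_single mult.commute)
next
  case (add a b) then show ?case by (simp add: distrib_left distrib_right)
qed

lemma fa_smult_mult_left: "fa_smult c x * y = fa_smult c (x * y)"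
  by (simp add: fa_smult_def mult.assoc)

lemma fa_smult_mult_right: "x * fa_smult c y = fa_smult c (x * y)"
  by (simp add: fa_smult_def mult.assoc[symmetric] fa_const_commute[of c x])

lemma fa_smult_add: "fa_smult c (x + y) = fa_smult c x + fa_smult c y"
  by (simp add: fa_smult_def distrib_left)

lemma fa_smult_diff: "fa_smult c (x - y) = fa_smult c x - fa_smult c y"
  by (simp add: fa_smult_def right_diff_distrib)

lemma fa_smult_fa_smult: "fa_smult c (fa_smult d x) = fa_smult (c * d) x"
  by (simp add: fa_smult_def mult.assoc[symmetric] fa_const_mult)

lemma lookup_fa_smult: "Poly_Mapping.lookup (fa_smult c x) w = c * Poly_Mapping.lookup x w"
proof (induction x rule: poly_mapping_induct_single)
  case zero then show ?case by (simp add: fa_smult_def)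
next
  case (single v d) then show ?case
    by (simp add: fa_smult_def fa_const_def mult_single lookup_single when_def)
next
  case (add a b) then show ?case by (simp add: fa_smult_def distrib_left lookup_add)
qed

subsection \<open>Substitution homomorphisms\<close>

fun word_eval :: "(awgen \<Rightarrow> 'a::field freealg) \<Rightarrow> aw_word \<Rightarrow> 'a freealg" where
  "word_eval g (AWWord ls) = prod_list (map g ls)"

lemma word_eval_zero [simp]: "word_eval g 0 = 1"
  by (simp add: zero_aw_word_def)

lemma word_eval_plus: "word_eval g (v + w) = word_eval g v * word_eval g w"
  by (cases v; cases w) simp

definition fa_subst :: "(awgen \<Rightarrow> 'a::field freealg) \<Rightarrow> 'a freealg \<Rightarrow> 'a freealg" where
  "fa_subst g p = (\<Sum>w\<in>Poly_Mapping.keys p. fa_const (Poly_Mapping.lookup p w) * word_eval g w)"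

lemma fa_subst_zero [simp]: "fa_subst g 0 = 0"
  by (simp add: fa_subst_def)

lemma fa_subst_single: "fa_subst g (Poly_Mapping.single w c) = fa_const c * word_eval g w"
  by (simp add: fa_subst_def fa_const_def)

lemma fa_subst_add: "fa_subst g (a + b) = fa_subst g a + fa_subst g b"
proof -
  let ?f = "\<lambda>p w. fa_const (Poly_Mapping.lookup p w) * word_eval g w"
  let ?K = "Poly_Mapping.keys a \<union> Poly_Mapping.keys b"
  have extend: "fa_subst g p = (\<Sum>w\<in>?K. ?f p w)" if "Poly_Mapping.keys p \<subseteq> ?K" for p
    unfolding fa_subst_def using that
    by (intro sum.mono_neutral_left) (auto simp: in_keys_iff fa_const_def)
  have "fa_subst g (a + b) = (\<Sum>w\<in>?K. ?f a w + ?f b w)"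
    using keys_add[of a b]
    by (simp add: extend lookup_add fa_const_add distrib_right)
  also have "\<dots> = fa_subst g a + fa_subst g b"
    by (simp add: extend sum.distrib)
  finally show ?thesis .
qed

lemma fa_subst_minus: "fa_subst g (- a) = - fa_subst g a"
  using fa_subst_add[of g "- a" a] by (simp add: eq_neg_iff_add_eq_0)

lemma fa_subst_diff: "fa_subst g (a - b) = fa_subst g a - fa_subst g b"
  using fa_subst_add[of g a "- b"] by (simp add: fa_subst_minus)

lemma fa_subst_mult: "fa_subst g (a * b) = fa_subst g a * fa_subst g b"
proof (induction a rule: poly_mapping_induct_single)
  case zero then show ?case by simp
next
  case (add a1 a2) then show ?case by (simp add: distrib_right fa_subst_add)
next
  case (single v c)
  show ?case
  proof (induction b rule: poly_mapping_induct_single)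
    case zero then show ?case by simp
  next
    case (add b1 b2) then show ?case by (simp add: distrib_left fa_subst_add)
  next
    case (single w d)
    have "fa_subst g (Poly_Mapping.single v c * Poly_Mapping.single w d)
        = fa_const c * (fa_const d * word_eval g v) * word_eval g w"
      by (simp add: mult_single fa_subst_single word_eval_plus fa_const_mult[symmetric] mult.assoc)
    then show ?case
      by (simp add: fa_subst_single fa_const_commute[of d] mult.assoc)
  qed
qed

lemma fa_subst_const [simp]: "fa_subst g (fa_const c) = fa_const c"
  by (simp add: fa_const_def fa_subst_single)

lemma fa_subst_one [simp]: "fa_subst g 1 = 1"
  using fa_subst_const[of g 1] by (simp add: fa_const_def)

lemma fa_subst_gen [simp]: "fa_subst g (fa_gen l) = g l"
  by (simp add: fa_gen_def fa_subst_single fa_const_def)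

lemma fa_subst_smult: "fa_subst g (fa_smult c x) = fa_smult c (fa_subst g x)"
  by (simp add: fa_smult_def fa_subst_mult)

lemma fa_subst_prod_list: "fa_subst g (prod_list xs) = prod_list (map (fa_subst g) xs)"
  by (induction xs) (simp_all add: fa_subst_mult)

lemma fa_subst_word_eval: "fa_subst g (word_eval h w) = word_eval (\<lambda>l. fa_subst g (h l)) w"
  by (cases w) (simp add: fa_subst_prod_list comp_def)

lemma fa_subst_fa_subst: "fa_subst g (fa_subst h p) = fa_subst (\<lambda>l. fa_subst g (h l)) p"
proof (induction p rule: poly_mapping_induct_single)
  case zero then show ?case by simp
next
  case (add a b) then show ?case by (simp add: fa_subst_add)
next
  case (single w c) then show ?case by (simp add: fa_subst_single fa_subst_mult fa_subst_word_eval)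
qed

lemma word_eval_fa_gen: "word_eval fa_gen w = Poly_Mapping.single w 1"
proof (cases w)
  case (AWWord ls) then show ?thesis
  proof (induction ls arbitrary: w)
    case Nil then show ?case by (simp add: zero_aw_word_def[symmetric])
  next
    case (Cons l ls) then show ?case by (simp add: fa_gen_def mult_single)
  qed
qed

lemma fa_subst_fa_gen [simp]: "fa_subst fa_gen p = p"
proof (induction p rule: poly_mapping_induct_single)
  case zero then show ?case by simp
next
  case (add a b) then show ?case by (simp add: fa_subst_add)
next
  case (single w c) then show ?case
    by (simp add: fa_subst_single word_eval_fa_gen fa_const_def mult_single)
qed

lemma free_ring_ring: "ring (free_ring :: 'a::field freealg ring)"
proof -
  have "\<exists>y. x + y = 0" for x :: "'a freealg"
    using add.right_inverse by blast
  then show ?thesis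
    unfolding free_ring_def by unfold_locales (auto simp: algebra_simps Units_def)
qed

lemma free_ring_simps [simp]:
  "carrier free_ring = UNIV" "x \<oplus>\<^bsub>free_ring\<^esub> y = x + y" "x \<otimes>\<^bsub>free_ring\<^esub> y = x * y"
  "\<one>\<^bsub>free_ring\<^esub> = 1" "\<zero>\<^bsub>free_ring\<^esub> = 0"
  by (simp_all add: free_ring_def)

lemma free_ring_a_inv [simp]: "\<ominus>\<^bsub>free_ring\<^esub> (x :: 'a::field freealg) = - x"
proof -
  interpret ring "free_ring :: 'a freealg ring" by (rule free_ring_ring)
  show ?thesis by (rule minus_equality) simp_all
qed

lemma free_ring_a_minus [simp]: "x \<ominus>\<^bsub>free_ring\<^esub> (y :: 'a::field freealg) = x - y"
  by (simp add: a_minus_def)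

lemma fa_subst_ring_hom: "fa_subst g \<in> ring_hom free_ring free_ring"
  by (rule ring_hom_memI) (simp_all add: fa_subst_add fa_subst_mult)

lemma aw_ideal_ideal: "ideal (aw_ideal q) free_ring"
  unfolding aw_ideal_def by (rule ring.genideal_ideal[OF free_ring_ring]) simp

lemma aw_rel_subset_aw_ideal: "aw_rel q \<subseteq> aw_ideal q"
  unfolding aw_ideal_def by (rule ring.genideal_self[OF free_ring_ring]) simp

lemma aw_ideal_zero: "0 \<in> aw_ideal q"
  using additive_subgroup.zero_closed[OF ideal.axioms(1)[OF aw_ideal_ideal]] by simp

lemma aw_ideal_add: "x \<in> aw_ideal q \<Longrightarrow> y \<in> aw_ideal q \<Longrightarrow> x + y \<in> aw_ideal q"
  using additive_subgroup.a_closed[OF ideal.axioms(1)[OF aw_ideal_ideal]] by simp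

lemma aw_ideal_minus: "x \<in> aw_ideal q \<Longrightarrow> - x \<in> aw_ideal q"
  using additive_subgroup.a_inv_closed[OF ideal.axioms(1)[OF aw_ideal_ideal]] by simp

lemma aw_ideal_diff: "x \<in> aw_ideal q \<Longrightarrow> y \<in> aw_ideal q \<Longrightarrow> x - y \<in> aw_ideal q"
  using aw_ideal_add[of x q "- y"] aw_ideal_minus[of y q] by simp

lemma aw_ideal_mult_left: "x \<in> aw_ideal q \<Longrightarrow> a * x \<in> aw_ideal q"
  using ideal.I_l_closed[OF aw_ideal_ideal] by simp

lemma aw_ideal_mult_right: "x \<in> aw_ideal q \<Longrightarrow> x * a \<in> aw_ideal q"
  using ideal.I_r_closed[OF aw_ideal_ideal] by simp

lemma aw_cls_eq_iff: "aw_cls q x = aw_cls q y \<longleftrightarrow> x - y \<in> aw_ideal q"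
proof -
  interpret abelian_subgroup "aw_ideal q" free_ring
    using aw_ideal_ideal ideal.axioms(1) ring.is_abelian_group[OF free_ring_ring]
    by (blast intro: abelian_subgroupI3)
  have "aw_cls q x = aw_cls q y \<longleftrightarrow> x \<in> aw_cls q y"
    unfolding aw_cls_def using a_repr_independence' a_repr_independenceD by auto
  also have "\<dots> \<longleftrightarrow> x - y \<in> aw_ideal q"
    unfolding aw_cls_def by (simp add: a_rcos_module_minus[OF free_ring_ring])
  finally show ?thesis .
qed

lemma UAW_carrier: "carrier (UAW q) = range (aw_cls q)"
  by (auto simp: UAW_def FactRing_def A_RCOSETS_def' aw_cls_def)

lemma UAW_add: "aw_cls q x \<oplus>\<^bsub>UAW q\<^esub> aw_cls q y = aw_cls q (x + y)"
  using ideal.a_rcos_sum[OF aw_ideal_ideal, of x y q]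
  by (simp add: UAW_def FactRing_def aw_cls_def)

lemma UAW_mult: "aw_cls q x \<otimes>\<^bsub>UAW q\<^esub> aw_cls q y = aw_cls q (x * y)"
  using ideal.rcoset_mult_add[OF aw_ideal_ideal, of x y q]
  by (simp add: UAW_def FactRing_def aw_cls_def)

lemma UAW_one: "\<one>\<^bsub>UAW q\<^esub> = aw_cls q 1"
  by (simp add: UAW_def FactRing_def aw_cls_def)


lemma aw_cls_fa_smult: "aw_cls q (fa_smult c x) = aw_cls q (fa_const c) \<otimes>\<^bsub>UAW q\<^esub> aw_cls q x"
  by (simp add: fa_smult_def UAW_mult)

subsection \<open>Automorphisms induced from the free algebra\<close>

definition aw_compatible :: "'a::field \<Rightarrow> ('a freealg \<Rightarrow> 'a freealg) \<Rightarrow> bool" where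
  "aw_compatible q f \<longleftrightarrow> f \<in> ring_hom free_ring free_ring \<and> f ` aw_rel q \<subseteq> aw_ideal q"

lemma aw_compatible_aw_ideal:
  assumes "aw_compatible q f" and "x \<in> aw_ideal q"
  shows "f x \<in> aw_ideal q"
proof -
  interpret ring_hom_ring free_ring free_ring f
    using assms(1) ring_hom_ringI2[OF free_ring_ring free_ring_ring]
    unfolding aw_compatible_def by blast
  have "ideal {r \<in> carrier free_ring. f r \<in> aw_ideal q} free_ring"
    by (rule ideal_vimage[OF aw_ideal_ideal])
  then have "aw_ideal q \<subseteq> {r \<in> carrier free_ring. f r \<in> aw_ideal q}"
    using assms(1) unfolding aw_ideal_def aw_compatible_def
    by (intro ring.genideal_minimal[OF free_ring_ring]) auto
  with assms(2) show ?thesis by auto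
qed

lemma aw_compatible_comp:
  assumes "aw_compatible q f" and "aw_compatible q g"
  shows "aw_compatible q (f \<circ> g)"
proof -
  have "f \<circ> g \<in> ring_hom free_ring free_ring"
    using assms ring_hom_trans[of g free_ring free_ring f free_ring]
    unfolding aw_compatible_def by blast
  moreover have "(f \<circ> g) ` aw_rel q \<subseteq> aw_ideal q"
    using assms(2) aw_compatible_aw_ideal[OF assms(1)]
    unfolding aw_compatible_def by auto
  ultimately show ?thesis by (simp add: aw_compatible_def)
qed

lemma ring_hom_free_ring_diff:
  assumes "f \<in> ring_hom free_ring free_ring"
  shows "f (x - y) = f x - f y"
proof -
  interpret ring_hom_ring free_ring free_ring f
    by (rule ring_hom_ringI2[OF free_ring_ring free_ring_ring assms])
  show ?thesis using hom_add[of x "- y"] hom_a_inv[of y] by simp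
qed

text \<open>The chosen representative is irrelevant when \<open>f\<close> is compatible (\<open>aw_induced_cls\<close>).\<close>

definition aw_induced :: "'a::field \<Rightarrow> ('a freealg \<Rightarrow> 'a freealg) \<Rightarrow> 'a freealg set \<Rightarrow> 'a freealg set" where
  "aw_induced q f X = aw_cls q (f (SOME x. X = aw_cls q x))"

lemma aw_induced_cls:
  assumes "aw_compatible q f"
  shows "aw_induced q f (aw_cls q x) = aw_cls q (f x)"
proof -
  define y where "y = (SOME y. aw_cls q x = aw_cls q y)"
  have "aw_cls q x = aw_cls q y"
    unfolding y_def by (rule someI[of _ x]) simp
  then have "f (x - y) \<in> aw_ideal q"
    by (simp add: aw_cls_eq_iff aw_compatible_aw_ideal[OF assms])
  then have "aw_cls q (f x) = aw_cls q (f y)"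
    using assms by (simp add: aw_cls_eq_iff aw_compatible_def ring_hom_free_ring_diff)
  then show ?thesis by (simp add: aw_induced_def y_def)
qed

lemma aw_induced_ring_hom:
  assumes "aw_compatible q f"
  shows "aw_induced q f \<in> ring_hom (UAW q) (UAW q)"
proof -
  have f: "f \<in> ring_hom free_ring free_ring"
    using assms by (simp add: aw_compatible_def)
  show ?thesis
    by (rule ring_hom_memI)
       (auto simp: UAW_carrier aw_induced_cls[OF assms] UAW_add UAW_mult UAW_one
                   ring_hom_add[OF f, simplified] ring_hom_mult[OF f, simplified]
                   ring_hom_one[OF f, simplified])
qed

lemma aw_induced_alg_aut:
  assumes f: "aw_compatible q f" and g: "aw_compatible q g"
    and inverse: "\<And>x. f (g x) = x" "\<And>x. g (f x) = x"
    and scalars: "\<And>c. f (fa_const c) = fa_const c"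
  shows "aw_alg_aut q (aw_induced q f)"
  unfolding aw_alg_aut_def ring_iso_def
proof (intro conjI CollectI allI)
  show "aw_induced q f \<in> ring_hom (UAW q) (UAW q)"
    by (rule aw_induced_ring_hom[OF f])
  show "bij_betw (aw_induced q f) (carrier (UAW q)) (carrier (UAW q))"
    by (rule bij_betw_byWitness[where f'="aw_induced q g"])
       (auto simp: UAW_carrier aw_induced_cls[OF f] aw_induced_cls[OF g] inverse)
  show "aw_induced q f (aw_cls q (fa_const c)) = aw_cls q (fa_const c)" for c
    by (simp add: aw_induced_cls[OF f] scalars)
qed

subsection \<open>Compatibility with the defining relations\<close>

definition aw_centrals :: "'a::field \<Rightarrow> 'a freealg set" where
  "aw_centrals q = {aw_central q fA fB fC, aw_central q fB fC fA, aw_central q fC fA fB}"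

lemma aw_centrals_commutator_mem:
  assumes "d \<in> aw_centrals q" and "c - d \<in> aw_ideal q"
  shows "c * y - y * c \<in> aw_ideal q"
proof -
  have "d * y - y * d \<in> aw_ideal q"
    using assms(1) aw_rel_subset_aw_ideal unfolding aw_rel_def aw_centrals_def by blast
  moreover have "(c - d) * y - y * (c - d) \<in> aw_ideal q"
    by (rule aw_ideal_diff[OF aw_ideal_mult_right[OF assms(2)] aw_ideal_mult_left[OF assms(2)]])
  moreover have "c * y - y * c = (d * y - y * d) + ((c - d) * y - y * (c - d))"
    by (simp add: algebra_simps)
  ultimately show ?thesis by (simp add: aw_ideal_add)
qed

lemma aw_compatible_fa_subst:
  assumes "\<And>c. c \<in> aw_centrals q \<Longrightarrow> \<exists>d \<in> aw_centrals q. fa_subst g c - d \<in> aw_ideal q"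
  shows "aw_compatible q (fa_subst g)"
  unfolding aw_compatible_def
proof (intro conjI fa_subst_ring_hom image_subsetI)
  fix r assume "r \<in> aw_rel q"
  then obtain c y where r: "r = c * y - y * c" and c: "c \<in> aw_centrals q"
    unfolding aw_rel_def aw_centrals_def by blast
  from assms[OF c] obtain d where "d \<in> aw_centrals q" "fa_subst g c - d \<in> aw_ideal q" ..
  then show "fa_subst g r \<in> aw_ideal q"
    unfolding r by (simp add: fa_subst_diff fa_subst_mult aw_centrals_commutator_mem)
qed

lemma fa_subst_aw_central:
  "fa_subst g (aw_central q x y z) = aw_central q (fa_subst g x) (fa_subst g y) (fa_subst g z)"
  by (simp add: aw_central_def fa_subst_add fa_subst_diff fa_subst_smult fa_subst_mult)

definition rho_gen :: "awgen \<Rightarrow> 'a::field freealg" where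
  "rho_gen l = (case l of GA \<Rightarrow> fB | GB \<Rightarrow> fC | GC \<Rightarrow> fA)"

lemma rho_gen_simps [simp]: "rho_gen GA = fB" "rho_gen GB = fC" "rho_gen GC = fA"
  by (simp_all add: rho_gen_def)

lemma fa_subst_rho_gen_cube: "fa_subst rho_gen (fa_subst rho_gen (fa_subst rho_gen x)) = x"
proof -
  have gens: "fa_subst rho_gen (fa_subst rho_gen (rho_gen l)) = fa_gen l" for l
    by (cases l) simp_all
  have "fa_subst rho_gen (fa_subst rho_gen (fa_subst rho_gen x))
      = fa_subst (\<lambda>l. fa_subst rho_gen (fa_subst rho_gen (rho_gen l))) x"
    by (simp add: fa_subst_fa_subst)
  then show ?thesis by (simp only: gens fa_subst_fa_gen)
qed

lemma aw_compatible_rho: "aw_compatible q (fa_subst rho_gen)"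
  by (rule aw_compatible_fa_subst) (auto simp: aw_centrals_def fa_subst_aw_central aw_ideal_zero)

lemma fa_subst_rho_gen_alpha_beta_gamma:
  "fa_subst rho_gen (aw_alpha q) = aw_beta q"
  "fa_subst rho_gen (aw_beta q) = aw_gamma q"
  "fa_subst rho_gen (aw_gamma q) = aw_alpha q"
  by (simp_all add: aw_alpha_def aw_beta_def aw_gamma_def fa_subst_smult fa_subst_aw_central)

definition sigma_gen :: "'a::field \<Rightarrow> awgen \<Rightarrow> 'a freealg" where
  "sigma_gen q l = (case l of GA \<Rightarrow> fB | GB \<Rightarrow> fA
     | GC \<Rightarrow> fC + fa_smult (1 / (q - 1 / q)) (fA * fB - fB * fA))"

lemma sigma_gen_simps [simp]:
  "sigma_gen q GA = fB" "sigma_gen q GB = fA"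
  "sigma_gen q GC = fC + fa_smult (1 / (q - 1 / q)) (fA * fB - fB * fA)"
  by (simp_all add: sigma_gen_def)

lemma fa_subst_sigma_gen_involution: "fa_subst (sigma_gen q) (fa_subst (sigma_gen q) x) = x"
proof -
  have gens: "fa_subst (sigma_gen q) (sigma_gen q l) = fa_gen l" for l
    by (cases l) (simp_all add: fa_subst_add fa_subst_smult fa_subst_diff fa_subst_mult fa_smult_diff)
  have "fa_subst (sigma_gen q) (fa_subst (sigma_gen q) x)
      = fa_subst (\<lambda>l. fa_subst (sigma_gen q) (sigma_gen q l)) x"
    by (rule fa_subst_fa_subst)
  then show ?thesis by (simp only: gens fa_subst_fa_gen)
qed

text \<open>With \<open>s, t, m\<close> in place of \<open>q, q\<^sup>-\<^sup>1, 1/(q\<^sup>2 - q\<^sup>-\<^sup>2)\<close> the identities for \<open>\<sigma>\<close> become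
  polynomial identities in independent scalars, verified coefficientwise on words.\<close>

definition qcentral :: "'a::field \<Rightarrow> 'a \<Rightarrow> 'a \<Rightarrow> 'a freealg \<Rightarrow> 'a freealg \<Rightarrow> 'a freealg \<Rightarrow> 'a freealg" where
  "qcentral s t m x y z = x + fa_smult m (fa_smult s (y * z) - fa_smult t (z * y))"

lemma aw_central_eq_qcentral: "aw_central q x y z = qcentral q (1 / q) (1 / (q^2 - (1 / q)^2)) x y z"
  by (simp add: aw_central_def qcentral_def power_one_over)

lemmas fa_expand_simps = distrib_left distrib_right left_diff_distrib right_diff_distrib
  fa_smult_mult_left fa_smult_mult_right fa_smult_add fa_smult_diff fa_smult_fa_smult
  fa_gen_def mult_single plus_aw_word.simps

lemmas fa_lookup_simps = lookup_add lookup_minus lookup_single lookup_fa_smult when_def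

lemma qcentral_sigma_A:
  assumes "k = m * (s + t)"
  shows "qcentral s t m fB fA (fC + fa_smult k (fA * fB - fB * fA))
       = qcentral s t m fB fC fA
         + fa_smult k (fA * qcentral s t m fC fA fB - qcentral s t m fC fA fB * fA)"
  unfolding qcentral_def fa_expand_simps
  by (rule poly_mapping_eqI)
     (auto simp: fa_lookup_simps assms algebra_simps split: if_splits)

lemma qcentral_sigma_B:
  assumes "k = m * (s + t)"
  shows "qcentral s t m fA (fC + fa_smult k (fA * fB - fB * fA)) fB
       = qcentral s t m fA fB fC
         + fa_smult k (qcentral s t m fC fA fB * fB - fB * qcentral s t m fC fA fB)"
  unfolding qcentral_def fa_expand_simps
  by (rule poly_mapping_eqI)
     (auto simp: fa_lookup_simps assms algebra_simps split: if_splits)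

lemma qcentral_sigma_C:
  assumes "k = m * (s + t)"
  shows "qcentral s t m (fC + fa_smult k (fA * fB - fB * fA)) fB fA = qcentral s t m fC fA fB"
  unfolding qcentral_def fa_expand_simps
  by (rule poly_mapping_eqI)
     (auto simp: fa_lookup_simps assms algebra_simps split: if_splits)

lemma sigma_scalar_eq:
  fixes q :: "'a::field"
  assumes "q \<noteq> 0" and "q ^ 4 \<noteq> 1"
  shows "1 / (q - 1 / q) = 1 / (q^2 - (1 / q)^2) * (q + 1 / q)"
proof -
  have "q + 1 / q \<noteq> 0"
  proof
    assume "q + 1 / q = 0"
    then have "q^2 = -1"
      using assms(1) by (simp add: field_simps power2_eq_square eq_neg_iff_add_eq_0 add.commute)
    then have "q ^ 4 = 1"
      by (metis power_mult[of q 2 2] num_double numeral_times_numeral power2_minus power_one)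
    with assms(2) show False ..
  qed
  moreover have "q^2 - (1 / q)^2 = (q - 1 / q) * (q + 1 / q)"
    by (simp add: power2_eq_square algebra_simps)
  ultimately show ?thesis by simp
qed

lemma aw_ideal_fa_smult_commutator:
  assumes "c \<in> aw_centrals q"
  shows "fa_smult k (c * y - y * c) \<in> aw_ideal q" and "fa_smult k (y * c - c * y) \<in> aw_ideal q"
proof -
  have "c * y - y * c \<in> aw_ideal q"
    using aw_centrals_commutator_mem[OF assms, of c] by (simp add: aw_ideal_zero)
  then show "fa_smult k (c * y - y * c) \<in> aw_ideal q" "fa_smult k (y * c - c * y) \<in> aw_ideal q"
    using aw_ideal_minus unfolding fa_smult_def by (fastforce intro: aw_ideal_mult_left)+
qed

lemma fa_subst_sigma_gen_centrals:
  fixes q :: "'a::field"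
  assumes "q \<noteq> 0" and "q ^ 4 \<noteq> 1"
  shows "aw_cls q (fa_subst (sigma_gen q) (aw_central q fA fB fC)) = aw_cls q (aw_central q fB fC fA)"
    and "aw_cls q (fa_subst (sigma_gen q) (aw_central q fB fC fA)) = aw_cls q (aw_central q fA fB fC)"
    and "fa_subst (sigma_gen q) (aw_central q fC fA fB) = aw_central q fC fA fB"
proof -
  note k = sigma_scalar_eq[OF assms]
  have C: "aw_central q fC fA fB \<in> aw_centrals q"
    by (simp add: aw_centrals_def)
  show "aw_cls q (fa_subst (sigma_gen q) (aw_central q fA fB fC)) = aw_cls q (aw_central q fB fC fA)"
    unfolding aw_cls_eq_iff fa_subst_aw_central
    by (simp add: aw_central_eq_qcentral qcentral_sigma_A[OF k]
                  aw_ideal_fa_smult_commutator(2)[OF C, unfolded aw_central_eq_qcentral])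
  show "aw_cls q (fa_subst (sigma_gen q) (aw_central q fB fC fA)) = aw_cls q (aw_central q fA fB fC)"
    unfolding aw_cls_eq_iff fa_subst_aw_central
    by (simp add: aw_central_eq_qcentral qcentral_sigma_B[OF k]
                  aw_ideal_fa_smult_commutator(1)[OF C, unfolded aw_central_eq_qcentral])
  show "fa_subst (sigma_gen q) (aw_central q fC fA fB) = aw_central q fC fA fB"
    unfolding fa_subst_aw_central by (simp add: aw_central_eq_qcentral qcentral_sigma_C[OF k])
qed

lemma aw_compatible_sigma:
  fixes q :: "'a::field"
  assumes "q \<noteq> 0" and "q ^ 4 \<noteq> 1"
  shows "aw_compatible q (fa_subst (sigma_gen q))"
  using fa_subst_sigma_gen_centrals[OF assms]
  by (intro aw_compatible_fa_subst) (auto simp: aw_centrals_def aw_cls_eq_iff aw_ideal_zero)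

lemma aw_cls_sigma_gen_alpha_beta_gamma:
  fixes q :: "'a::field"
  assumes "q \<noteq> 0" and "q ^ 4 \<noteq> 1"
  shows "aw_cls q (fa_subst (sigma_gen q) (aw_alpha q)) = aw_cls q (aw_beta q)"
    and "aw_cls q (fa_subst (sigma_gen q) (aw_beta q)) = aw_cls q (aw_alpha q)"
    and "aw_cls q (fa_subst (sigma_gen q) (aw_gamma q)) = aw_cls q (aw_gamma q)"
  using fa_subst_sigma_gen_centrals[OF assms]
  by (simp_all add: aw_alpha_def aw_beta_def aw_gamma_def fa_subst_smult aw_cls_fa_smult)

theorem theorem3p1:
  fixes q :: "'a::field"
  assumes "q \<noteq> 0" and "q ^ 4 \<noteq> 1"
  shows "\<exists>\<rho> \<sigma>. aw_alg_aut q \<rho> \<and> aw_alg_aut q \<sigma> \<and>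
    (\<forall>x\<in>carrier (UAW q). \<rho> (\<rho> (\<rho> x)) = x) \<and>
    (\<forall>x\<in>carrier (UAW q). \<sigma> (\<sigma> x) = x) \<and>
    \<rho> (aw_cls q fA) = aw_cls q fB \<and>
    \<rho> (aw_cls q fB) = aw_cls q fC \<and>
    \<rho> (aw_cls q fC) = aw_cls q fA \<and>
    \<rho> (aw_cls q (aw_alpha q)) = aw_cls q (aw_beta q) \<and>
    \<rho> (aw_cls q (aw_beta q)) = aw_cls q (aw_gamma q) \<and>
    \<rho> (aw_cls q (aw_gamma q)) = aw_cls q (aw_alpha q) \<and>
    \<sigma> (aw_cls q fA) = aw_cls q fB \<and>
    \<sigma> (aw_cls q fB) = aw_cls q fA \<and>
    \<sigma> (aw_cls q fC) = aw_cls q (fC + fa_smult (1 / (q - 1 / q)) (fA * fB - fB * fA)) \<and>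
    \<sigma> (aw_cls q (aw_alpha q)) = aw_cls q (aw_beta q) \<and>
    \<sigma> (aw_cls q (aw_beta q)) = aw_cls q (aw_alpha q) \<and>
    \<sigma> (aw_cls q (aw_gamma q)) = aw_cls q (aw_gamma q)"
proof -
  let ?\<rho> = "fa_subst rho_gen" and ?\<sigma> = "fa_subst (sigma_gen q)"
  note compat_\<rho> = aw_compatible_rho[of q] and compat_\<sigma> = aw_compatible_sigma[OF assms]
  note \<rho>_cls = aw_induced_cls[OF compat_\<rho>] and \<sigma>_cls = aw_induced_cls[OF compat_\<sigma>]
  note \<rho>_cube = fa_subst_rho_gen_cube and \<sigma>_square = fa_subst_sigma_gen_involution[of q]
  have aut_\<rho>: "aw_alg_aut q (aw_induced q ?\<rho>)"
    using compat_\<rho> aw_compatible_comp[OF compat_\<rho> compat_\<rho>] \<rho>_cube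
    by (intro aw_induced_alg_aut[where g = "?\<rho> \<circ> ?\<rho>"]) simp_all
  have aut_\<sigma>: "aw_alg_aut q (aw_induced q ?\<sigma>)"
    using compat_\<sigma> \<sigma>_square by (intro aw_induced_alg_aut) simp_all
  show ?thesis
    by (rule exI[of _ "aw_induced q ?\<rho>"], rule exI[of _ "aw_induced q ?\<sigma>"])
       (auto simp: aut_\<rho> aut_\<sigma> UAW_carrier \<rho>_cls \<sigma>_cls \<rho>_cube \<sigma>_square
                   fa_subst_rho_gen_alpha_beta_gamma aw_cls_sigma_gen_alpha_beta_gamma[OF assms])
qed

end
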